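(* Let $E$ be a pointed closed convex cone in a finite-dimensional real inner product space and $F\subsetneq E$ a maximal face (maximal among faces different from $E$). Then $F$ is exposed in $E$, the relative dual face $F^\perp\cap E^\circledast$ is nonzero, and $F^\perp\cap E^\circledast$ is an extreme ray of $E^\circledast$ if and only if it contains an exposed ray of $E^\circledast$.
   Context: $E^\circledast=E^*\cap\operatorname{span}E$ where $E^*=\{y:\langle y,x\rangle\ge0\ \forall x\in E\}$. A face of a convex set $C$ is a subset $F$ such that every segment in $C$ whose midpoint lies in $F$ lies in $F$; a face is exposed if it is the intersection of $C$ with a supporting hyperplane. An extreme ray is a one-dimensional face; an exposed ray is an exposed one-dimensional face. *)

theory Defs
  imports "HOL-Analysis.Analysis"
begin

definition dual_cone :: "'a::euclidean_space set \<Rightarrow> 'a set" where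
  "dual_cone E = {y. \<forall>x\<in>E. 0 \<le> y \<bullet> x}"

definition rel_dual_cone :: "'a::euclidean_space set \<Rightarrow> 'a set" where
  "rel_dual_cone E = dual_cone E \<inter> span E"

definition orth_compl :: "'a::euclidean_space set \<Rightarrow> 'a set" where
  "orth_compl F = {y. \<forall>x\<in>F. y \<bullet> x = 0}"

definition pointed_cone :: "'a::real_vector set \<Rightarrow> bool" where
  "pointed_cone E \<longleftrightarrow> E \<inter> uminus ` E = {0}"

definition extreme_ray_of :: "'a::euclidean_space set \<Rightarrow> 'a set \<Rightarrow> bool" where
  "extreme_ray_of R C \<longleftrightarrow> R face_of C \<and> aff_dim R = 1"

definition exposed_ray_of :: "'a::euclidean_space set \<Rightarrow> 'a set \<Rightarrow> bool" where
  "exposed_ray_of R C \<longleftrightarrow> R exposed_face_of C \<and> aff_dim R = 1"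

end

theory Submission
  imports Defs
begin

(*
  Pick x in the relative interior of F. A hyperplane supporting E at x, with its normal projected
  into span E, yields w in the relative dual cone with F \<subseteq> E \<inter> w\<^sup>\<perp> \<noteq> E, and maximality
  forces F = E \<inter> w\<^sup>\<perp>: so F is exposed and w is a nonzero element of the relative dual face
  F\<^sup>\<perp> \<inter> E\<^sup>\<circledast>. That face equals E\<^sup>\<circledast> \<inter> x\<^sup>\<perp>, so it is itself exposed, which gives one
  direction of the equivalence. Conversely, by the bipolar theorem every nonempty exposed face R
  of E\<^sup>\<circledast> is E\<^sup>\<circledast> \<inter> z\<^sup>\<perp> for some z in E. If R \<subseteq> F\<^sup>\<perp> contains v \<noteq> 0, maximality gives
  F = E \<inter> v\<^sup>\<perp>, which contains z; hence F\<^sup>\<perp> \<inter> E\<^sup>\<circledast> \<subseteq> E\<^sup>\<circledast> \<inter> z\<^sup>\<perp> = R.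
*)

definition maximal_face_of :: "['a::real_vector set, 'a set] \<Rightarrow> bool"
    (infixr \<open>(maximal'_face'_of)\<close> 50)
  where "T maximal_face_of S \<longleftrightarrow>
           T face_of S \<and> T \<noteq> S \<and> (\<forall>U. U face_of S \<longrightarrow> U \<noteq> S \<longrightarrow> T \<subseteq> U \<longrightarrow> U = T)"

abbreviation rel_dual_face :: "'a::euclidean_space set \<Rightarrow> 'a set \<Rightarrow> 'a set"
  where "rel_dual_face E F \<equiv> orth_compl F \<inter> rel_dual_cone E"

lemma inner_span_representative:
  fixes a :: "'a::euclidean_space"
  obtains a' where "a' \<in> span S" "\<And>x. x \<in> span S \<Longrightarrow> a' \<bullet> x = a \<bullet> x"
proof -
  obtain y z where y: "y \<in> span S" and z: "\<And>w. w \<in> span S \<Longrightarrow> orthogonal z w"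
    and a: "a = y + z"
    using orthogonal_subspace_decomp_exists by blast
  show ?thesis
  proof (rule that[OF y])
    fix x assume "x \<in> span S"
    then have "z \<bullet> x = 0" using z by (simp add: orthogonal_def)
    then show "y \<bullet> x = a \<bullet> x" by (simp add: a inner_add_left)
  qed
qed

lemma conic_inner_lower_bound_imp_nonneg:
  assumes conic: "conic E" and bound: "\<And>y. y \<in> E \<Longrightarrow> b \<le> a \<bullet> y" and x: "x \<in> E"
  shows "0 \<le> a \<bullet> x"
proof (rule ccontr)
  assume "\<not> 0 \<le> a \<bullet> x"
  then have neg: "a \<bullet> x < 0" by simp
  define t where "t = (\<bar>b\<bar> + 1) / - (a \<bullet> x)"
  have "0 \<le> t" using neg unfolding t_def by (intro divide_nonneg_pos) auto
  then have "b \<le> a \<bullet> (t *\<^sub>R x)" by (intro bound conicD[OF conic x])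
  also have "a \<bullet> (t *\<^sub>R x) = - (\<bar>b\<bar> + 1)" using neg by (simp add: t_def)
  finally show False by simp
qed

lemma convex_cone_rel_dual_cone: "convex_cone (rel_dual_cone E)"
proof -
  have "dual_cone E = (\<Inter>x\<in>E. {y. x \<bullet> y \<ge> 0})"
    by (auto simp: dual_cone_def inner_commute)
  then have "convex_cone (dual_cone E)"
    by (auto intro!: convex_cone_Inter convex_cone_halfspace_ge)
  then show ?thesis
    unfolding rel_dual_cone_def
    using convex_cone_Inter[of "{dual_cone E, span E}"] convex_cone_span by auto
qed

lemma dual_cone_hyperplane_face_of:
  assumes "convex_cone E" "w \<in> dual_cone E"
  shows "E \<inter> {x. w \<bullet> x = 0} face_of E"
  using assms face_of_Int_supporting_hyperplane_ge[of E 0 w]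
  unfolding convex_cone_def dual_cone_def by auto

lemma rel_dual_cone_bipolar:
  fixes E :: "'a::euclidean_space set"
  assumes cone: "convex_cone E" and closed: "closed E" and z: "z \<in> span E"
    and nonneg: "\<And>y. y \<in> rel_dual_cone E \<Longrightarrow> 0 \<le> z \<bullet> y"
  shows "z \<in> E"
proof (rule ccontr)
  assume "z \<notin> E"
  have "convex E" "conic E" using cone by (simp_all add: convex_cone_def)
  obtain a b where az: "a \<bullet> z < b" and aE: "\<And>x. x \<in> E \<Longrightarrow> b < a \<bullet> x"
    using separating_hyperplane_closed_point[OF \<open>convex E\<close> closed \<open>z \<notin> E\<close>] by blast
  have "b < 0" using aE[OF convex_cone_contains_0[OF cone]] by simp
  have a_nonneg: "0 \<le> a \<bullet> x" if "x \<in> E" for x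
    using conic_inner_lower_bound_imp_nonneg[OF \<open>conic E\<close> _ that] aE less_imp_le by blast
  obtain a' where a': "a' \<in> span E" "\<And>x. x \<in> span E \<Longrightarrow> a' \<bullet> x = a \<bullet> x"
    using inner_span_representative by blast
  have "a' \<bullet> x = a \<bullet> x" if "x \<in> E" for x using a'(2) span_base that by blast
  then have "a' \<in> rel_dual_cone E"
    using a'(1) a_nonneg unfolding rel_dual_cone_def dual_cone_def by simp
  then have "0 \<le> z \<bullet> a'" by (rule nonneg)
  then have "0 \<le> a \<bullet> z" using a'(2)[OF z] by (simp add: inner_commute)
  then show False using az \<open>b < 0\<close> by simp
qed

lemma rel_dual_face_eq_hyperplane:
  assumes cone: "convex_cone E" and face: "F face_of E" and x: "x \<in> rel_interior F"
  shows "rel_dual_face E F = rel_dual_cone E \<inter> {y. x \<bullet> y = 0}"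
proof
  show "rel_dual_face E F \<subseteq> rel_dual_cone E \<inter> {y. x \<bullet> y = 0}"
    using x rel_interior_subset unfolding orth_compl_def by (auto simp: inner_commute)
next
  show "rel_dual_cone E \<inter> {y. x \<bullet> y = 0} \<subseteq> rel_dual_face E F"
  proof
    fix y assume y: "y \<in> rel_dual_cone E \<inter> {y. x \<bullet> y = 0}"
    have "E \<inter> {e. y \<bullet> e = 0} face_of E"
      using y by (intro dual_cone_hyperplane_face_of[OF cone]) (simp add: rel_dual_cone_def)
    moreover have "x \<in> E \<inter> {e. y \<bullet> e = 0}"
      using y x rel_interior_subset face_of_imp_subset[OF face] by (auto simp: inner_commute)
    ultimately have "F \<subseteq> E \<inter> {e. y \<bullet> e = 0}"
      using subset_of_face_of face_of_imp_subset[OF face] x by blast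
    then show "y \<in> rel_dual_face E F"
      using y unfolding orth_compl_def by auto
  qed
qed

lemma rel_dual_face_exposed_face_of:
  assumes cone: "convex_cone E" and face: "F face_of E"
  shows "rel_dual_face E F exposed_face_of rel_dual_cone E"
proof -
  have convex: "convex (rel_dual_cone E)"
    using convex_cone_rel_dual_cone[of E] by (simp add: convex_cone_def)
  show ?thesis
  proof (cases "F = {}")
    case True
    then show ?thesis using convex by (simp add: orth_compl_def)
  next
    case False
    then obtain x where x: "x \<in> rel_interior F"
      using rel_interior_eq_empty face_of_imp_convex[OF face] by blast
    have "x \<in> E" using x rel_interior_subset face_of_imp_subset[OF face] by blast
    then have "\<And>y. y \<in> rel_dual_cone E \<Longrightarrow> 0 \<le> x \<bullet> y"
      by (simp add: rel_dual_cone_def dual_cone_def inner_commute)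
    then show ?thesis
      unfolding rel_dual_face_eq_hyperplane[OF cone face x]
      by (rule exposed_face_of_Int_supporting_hyperplane_ge[OF convex])
  qed
qed

lemma rel_dual_face_nonzero:
  fixes E F :: "'a::euclidean_space set"
  assumes cone: "convex_cone E" and face: "F face_of E" and "F \<noteq> {}" "F \<noteq> E"
  obtains w where "w \<in> rel_dual_face E F" "w \<noteq> 0"
proof -
  have conic: "conic E" and convex: "convex E" using cone by (simp_all add: convex_cone_def)
  have FE: "F \<subseteq> E" using face by (rule face_of_imp_subset)
  obtain x where xF: "x \<in> rel_interior F"
    using rel_interior_eq_empty face_of_imp_convex[OF face] \<open>F \<noteq> {}\<close> by blast
  have xE: "x \<in> E" using xF FE rel_interior_subset by blast
  have "x \<notin> rel_interior E"
    using face_of_disjoint_rel_interior[OF face \<open>F \<noteq> E\<close>] xF rel_interior_subset FE by blast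
  then obtain a where "a \<noteq> 0" and ale: "\<And>y. y \<in> E \<Longrightarrow> a \<bullet> x \<le> a \<bullet> y"
    and alt: "\<And>y. y \<in> rel_interior E \<Longrightarrow> a \<bullet> x < a \<bullet> y"
    using supporting_hyperplane_rel_boundary[OF convex xE] by blast
  have a_nonneg: "0 \<le> a \<bullet> y" if "y \<in> E" for y
    using conic_inner_lower_bound_imp_nonneg[OF conic ale that] .
  have ax: "a \<bullet> x = 0"
    using a_nonneg[OF xE] ale[OF convex_cone_contains_0[OF cone]] by simp
  obtain y where y: "y \<in> rel_interior E"
    using rel_interior_eq_empty convex convex_cone_nonempty[OF cone] by blast
  obtain w where w: "w \<in> span E" "\<And>x. x \<in> span E \<Longrightarrow> w \<bullet> x = a \<bullet> x"
    using inner_span_representative by blast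
  have wE: "\<And>y. y \<in> E \<Longrightarrow> w \<bullet> y = a \<bullet> y" using w(2) span_base by blast
  have "w \<in> rel_dual_cone E"
    using w(1) wE a_nonneg by (simp add: rel_dual_cone_def dual_cone_def)
  moreover have "w \<in> orth_compl F"
  proof -
    have "E \<inter> {y. w \<bullet> y = 0} face_of E"
      using \<open>w \<in> rel_dual_cone E\<close>
      by (intro dual_cone_hyperplane_face_of[OF cone]) (simp add: rel_dual_cone_def)
    moreover have "x \<in> E \<inter> {y. w \<bullet> y = 0}" using xE wE ax by simp
    ultimately have "F \<subseteq> {y. w \<bullet> y = 0}" using subset_of_face_of FE xF by blast
    then show ?thesis by (auto simp: orth_compl_def)
  qed
  moreover have "w \<noteq> 0"
  proof -
    have "y \<in> E" using y rel_interior_subset by blast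
    then have "w \<bullet> y \<noteq> 0" using alt[OF y] ax wE by simp
    then show ?thesis by auto
  qed
  ultimately show thesis using that by blast
qed

lemma maximal_face_eq_hyperplane:
  fixes E F :: "'a::euclidean_space set"
  assumes cone: "convex_cone E" and maximal: "F maximal_face_of E"
    and w: "w \<in> rel_dual_face E F" "w \<noteq> 0"
  shows "F = E \<inter> {y. w \<bullet> y = 0}"
proof -
  have face: "F face_of E"
    and larger: "\<And>U. U face_of E \<Longrightarrow> U \<noteq> E \<Longrightarrow> F \<subseteq> U \<Longrightarrow> U = F"
    using maximal unfolding maximal_face_of_def by blast+
  have "E \<inter> {y. w \<bullet> y = 0} face_of E"
    using w(1) by (intro dual_cone_hyperplane_face_of[OF cone]) (simp add: rel_dual_cone_def)
  moreover have "E \<inter> {y. w \<bullet> y = 0} \<noteq> E"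
  proof
    assume "E \<inter> {y. w \<bullet> y = 0} = E"
    then have "orthogonal w w"
      using w(1) orthogonal_to_span[of w E w]
      by (auto simp: orthogonal_def rel_dual_cone_def)
    then show False using w(2) by (simp add: orthogonal_def)
  qed
  moreover have "F \<subseteq> E \<inter> {y. w \<bullet> y = 0}"
    using w(1) face_of_imp_subset[OF face] unfolding orth_compl_def by blast
  ultimately show ?thesis using larger by metis
qed

lemma maximal_face_exposed_by_rel_dual_face:
  fixes E F :: "'a::euclidean_space set"
  assumes cone: "convex_cone E" and maximal: "F maximal_face_of E" and "F \<noteq> {}"
  obtains w where "w \<in> rel_dual_face E F" "w \<noteq> 0" "F = E \<inter> {y. w \<bullet> y = 0}"
proof -
  have "F face_of E" "F \<noteq> E" using maximal unfolding maximal_face_of_def by blast+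
  then obtain w where w: "w \<in> rel_dual_face E F" "w \<noteq> 0"
    using rel_dual_face_nonzero[OF cone _ \<open>F \<noteq> {}\<close>] by blast
  show thesis using that[OF w maximal_face_eq_hyperplane[OF cone maximal w]] .
qed

lemma exposed_face_of_rel_dual_cone_eq_hyperplane:
  fixes E :: "'a::euclidean_space set"
  assumes cone: "convex_cone E" and closed: "closed E"
    and exposed: "R exposed_face_of rel_dual_cone E" and "R \<noteq> {}"
  obtains z where "z \<in> E" "R = rel_dual_cone E \<inter> {y. z \<bullet> y = 0}"
proof -
  obtain c b where cb: "rel_dual_cone E \<subseteq> {y. c \<bullet> y \<le> b}"
    and R: "R = rel_dual_cone E \<inter> {y. c \<bullet> y = b}"
    using exposed unfolding exposed_face_of_def by blast
  have "0 \<le> b" using cb convex_cone_contains_0[OF convex_cone_rel_dual_cone[of E]] by auto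
  moreover obtain v where "v \<in> R" using \<open>R \<noteq> {}\<close> by blast
  moreover have "0 \<le> - c \<bullet> v"
    using convex_cone_rel_dual_cone[of E] cb \<open>v \<in> R\<close> R
    by (intro conic_inner_lower_bound_imp_nonneg[where b = "- b"]) (auto simp: convex_cone_def)
  ultimately have "b = 0" using R by simp
  obtain c' where c': "c' \<in> span E" "\<And>x. x \<in> span E \<Longrightarrow> c' \<bullet> x = c \<bullet> x"
    using inner_span_representative by blast
  have c'_eq: "(- c') \<bullet> y = - (c \<bullet> y)" if "y \<in> rel_dual_cone E" for y
    using c'(2) that by (simp add: rel_dual_cone_def)
  show thesis
  proof
    show "- c' \<in> E"
      using c' cb c'_eq \<open>b = 0\<close>
      by (intro rel_dual_cone_bipolar[OF cone closed]) (auto simp: span_neg)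
    show "R = rel_dual_cone E \<inter> {y. (- c') \<bullet> y = 0}"
      using R c'_eq \<open>b = 0\<close> by auto
  qed
qed

lemma exposed_face_in_rel_dual_face_of_maximal_face:
  fixes E F :: "'a::euclidean_space set"
  assumes cone: "convex_cone E" and closed: "closed E" and maximal: "F maximal_face_of E"
    and exposed: "R exposed_face_of rel_dual_cone E"
    and R: "R \<subseteq> rel_dual_face E F" "v \<in> R" "v \<noteq> 0"
  shows "R = rel_dual_face E F"
proof
  obtain z where "z \<in> E" and Rz: "R = rel_dual_cone E \<inter> {y. z \<bullet> y = 0}"
    using exposed_face_of_rel_dual_cone_eq_hyperplane[OF cone closed exposed] R(2) by blast
  have "F = E \<inter> {y. v \<bullet> y = 0}"
    using R by (intro maximal_face_eq_hyperplane[OF cone maximal]) auto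
  moreover have "v \<bullet> z = 0" using R(2) Rz by (simp add: inner_commute)
  ultimately have "z \<in> F" using \<open>z \<in> E\<close> by blast
  then show "rel_dual_face E F \<subseteq> R"
    unfolding Rz orth_compl_def by (auto simp: inner_commute)
qed (fact R)

lemma rel_dual_face_of_maximal_face_extreme_ray_iff:
  fixes E F :: "'a::euclidean_space set"
  assumes cone: "convex_cone E" and closed: "closed E" and maximal: "F maximal_face_of E"
  shows "extreme_ray_of (rel_dual_face E F) (rel_dual_cone E) \<longleftrightarrow>
         (\<exists>R. exposed_ray_of R (rel_dual_cone E) \<and> R \<subseteq> rel_dual_face E F)"
proof
  assume "extreme_ray_of (rel_dual_face E F) (rel_dual_cone E)"
  then show "\<exists>R. exposed_ray_of R (rel_dual_cone E) \<and> R \<subseteq> rel_dual_face E F"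
    using rel_dual_face_exposed_face_of[OF cone] maximal
    unfolding extreme_ray_of_def exposed_ray_of_def maximal_face_of_def by blast
next
  assume "\<exists>R. exposed_ray_of R (rel_dual_cone E) \<and> R \<subseteq> rel_dual_face E F"
  then obtain R where R: "R exposed_face_of rel_dual_cone E" "aff_dim R = 1"
    "R \<subseteq> rel_dual_face E F"
    unfolding exposed_ray_of_def by blast
  have "\<not> R \<subseteq> {0}"
  proof
    assume "R \<subseteq> {0}"
    then have "R = {} \<or> R = {0}" by blast
    then show False using R(2) by auto
  qed
  then obtain v where "v \<in> R" "v \<noteq> 0" by blast
  then have "R = rel_dual_face E F"
    using exposed_face_in_rel_dual_face_of_maximal_face[OF cone closed maximal R(1,3)] by blast
  then show "extreme_ray_of (rel_dual_face E F) (rel_dual_cone E)"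
    using R(1,2) unfolding extreme_ray_of_def exposed_face_of_def by blast
qed

theorem mainTheorem10:
  fixes E F :: "'a::euclidean_space set"
  assumes cone: "convex_cone E" and closed: "closed E" and pointed: "pointed_cone E"
    and face: "F face_of E" and nonempty: "F \<noteq> {}" and proper: "F \<noteq> E"
    and maximal: "\<And>G. G face_of E \<Longrightarrow> G \<noteq> E \<Longrightarrow> F \<subseteq> G \<Longrightarrow> G = F"
  shows "F exposed_face_of E \<and>
         orth_compl F \<inter> rel_dual_cone E \<noteq> {0} \<and>
         (extreme_ray_of (orth_compl F \<inter> rel_dual_cone E) (rel_dual_cone E) \<longleftrightarrow>
         (\<exists>R. exposed_ray_of R (rel_dual_cone E) \<and> R \<subseteq> orth_compl F \<inter> rel_dual_cone E))"
proof -
  have max_face: "F maximal_face_of E"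
    using face proper maximal by (simp add: maximal_face_of_def)
  obtain w where w: "w \<in> rel_dual_face E F" "w \<noteq> 0" and F: "F = E \<inter> {y. w \<bullet> y = 0}"
    using maximal_face_exposed_by_rel_dual_face[OF cone max_face nonempty] .
  have "F exposed_face_of E"
    unfolding F using w(1) cone
    by (intro exposed_face_of_Int_supporting_hyperplane_ge)
       (auto simp: convex_cone_def rel_dual_cone_def dual_cone_def)
  moreover have "rel_dual_face E F \<noteq> {0}" using w by blast
  ultimately show ?thesis
    using rel_dual_face_of_maximal_face_extreme_ray_iff[OF cone closed max_face] by blast
qed

end
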